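(* Let $X$ be a real Banach space and $T:X\rightrightarrows X^*$ a monotone operator whose domain $D_T$ is bounded. Consider the conditions: (i) for every $x\in X$ with $x\notin\overline{D_T}$, $\sup\left\{\frac{\langle z^*,x-z\rangle}{\|x-z\|} : (z,z^* )\in G(T)\right\}=\infty$; (ii) $\pi_1\,\mathrm{dom}\,\varphi_T\subset\overline{D_T}$; (iii) $\overline{D_T}=\overline{\mathrm{co}\,D_T}=\overline{\pi_1\,\mathrm{dom}\,\varphi_T}$; (iv) $\overline{D_T}$ is convex. Then (i), (ii), (iii) are equivalent, and each implies (iv). If moreover $T$ is maximal monotone, then all four conditions (i)–(iv) are equivalent.
   Context: $X$ is a real Banach space with topological dual $X^*$ and pairing $\langle x,x^*\rangle$. A (multivalued) operator $T:X\rightrightarrows X^*$ has graph $G(T)=\{(x,x^* ):x^*\in T(x)\}$, domain $D_T=\{x:T(x)\neq\emptyset\}$ and range $R_T=\bigcup_{x}T(x)$. $T$ is monotone if $\langle x^*-y^*,x-y\rangle\ge0$ for all $(x,x^* ),(y,y^* )\in G(T)$; it is maximal monotone if no monotone operator has a graph strictly containing $G(T)$. The Fitzpatrick function of a monotone $T$ is $\varphi_T(x,x^* )=\sup\{\langle x^*-z^*,z-x\rangle:(z,z^* )\in G(T)\}+\langle x^*,x\rangle$, $\mathrm{dom}\,\varphi_T=\{(x,x^* ):\varphi_T(x,x^* )<\infty\}$, and $\pi_1:X\times X^*\to X$, $\pi_2:X\times X^*\to X^*$ are the projections. $\mathrm{co}$ denotes convex hull and bars denote norm closure. *)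

theory Defs
  imports "HOL-Analysis.Analysis"
begin

text \<open>X is a real Banach space ('a::banach); its dual X* is 'a blinfun (bounded linear to real);
  the pairing is blinfun_apply. A multivalued operator is T :: 'a \<Rightarrow> a set of functionals.\<close>

definition graph_op :: "('a::real_normed_vector \<Rightarrow> ('a \<Rightarrow>\<^sub>L real) set) \<Rightarrow> ('a \<times> ('a \<Rightarrow>\<^sub>L real)) set" where
  "graph_op T = {(x, xs). xs \<in> T x}"

definition dom_op :: "('a::real_normed_vector \<Rightarrow> ('a \<Rightarrow>\<^sub>L real) set) \<Rightarrow> 'a set" where
  "dom_op T = {x. T x \<noteq> {}}"

definition range_op :: "('a::real_normed_vector \<Rightarrow> ('a \<Rightarrow>\<^sub>L real) set) \<Rightarrow> ('a \<Rightarrow>\<^sub>L real) set" where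
  "range_op T = (\<Union>x. T x)"

definition monotone_op :: "('a::real_normed_vector \<Rightarrow> ('a \<Rightarrow>\<^sub>L real) set) \<Rightarrow> bool" where
  "monotone_op T \<longleftrightarrow>
     (\<forall>(x, xs)\<in>graph_op T. \<forall>(y, ys)\<in>graph_op T. blinfun_apply (xs - ys) (x - y) \<ge> 0)"

definition maximal_monotone_op :: "('a::real_normed_vector \<Rightarrow> ('a \<Rightarrow>\<^sub>L real) set) \<Rightarrow> bool" where
  "maximal_monotone_op T \<longleftrightarrow> monotone_op T \<and>
     (\<forall>S. monotone_op S \<and> graph_op T \<subseteq> graph_op S \<longrightarrow> graph_op S = graph_op T)"

definition fitzpatrick :: "('a::real_normed_vector \<Rightarrow> ('a \<Rightarrow>\<^sub>L real) set) \<Rightarrow> 'a \<Rightarrow> ('a \<Rightarrow>\<^sub>L real) \<Rightarrow> ereal" where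
  "fitzpatrick T x xs =
     (SUP (z, zs)\<in>graph_op T. ereal (blinfun_apply (xs - zs) (z - x))) + ereal (blinfun_apply xs x)"

definition dom_fitzpatrick :: "('a::real_normed_vector \<Rightarrow> ('a \<Rightarrow>\<^sub>L real) set) \<Rightarrow> ('a \<times> ('a \<Rightarrow>\<^sub>L real)) set" where
  "dom_fitzpatrick T = {(x, xs). fitzpatrick T x xs < \<infinity>}"

end

theory Submission
  imports Defs
begin

text \<open>
  The one non-elementary tool is the separation of a point from a closed convex set by a
  continuous linear functional.

  For \<open>x \<notin> cl D\<^sub>T\<close>, membership \<open>x \<in> \<pi>\<^sub>1 dom \<phi>\<^sub>T\<close> is equivalent to bounded slopes, which gives
  (i)\<open>\<longleftrightarrow>\<close>(ii); (ii)\<open>\<longleftrightarrow>\<close>(iii) is pure closure/convex-hull bookkeeping, and (iii)\<open>\<longrightarrow>\<close>(iv) is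
  immediate. Finally, for maximal monotone \<open>T\<close>, (iv)\<open>\<longrightarrow>\<close>(ii) follows by separating a point
  \<open>x \<notin> cl D\<^sub>T\<close> and adding a large multiple of the separating functional to \<open>x*\<close>.
\<close>

lemma le_INF_add:
  fixes f g :: "'i \<Rightarrow> real"
  assumes "A \<noteq> {}" "B \<noteq> {}" and "\<And>a b. a \<in> A \<Longrightarrow> b \<in> B \<Longrightarrow> c \<le> f a + g b"
  shows "c \<le> (INF a\<in>A. f a) + (INF b\<in>B. g b)"
proof -
  have "c - g b \<le> (INF a\<in>A. f a)" if "b \<in> B" for b
    by (rule cINF_greatest[OF assms(1)]) (use assms(3) that in fastforce)
  then have "c - (INF a\<in>A. f a) \<le> (INF b\<in>B. g b)"
    by (intro cINF_greatest[OF assms(2)]) fastforce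
  then show ?thesis by simp
qed

lemma le_INF_mult:
  fixes f :: "'i \<Rightarrow> real"
  assumes "A \<noteq> {}" "c > 0" and "\<And>a. a \<in> A \<Longrightarrow> r \<le> c * f a"
  shows "r \<le> c * (INF a\<in>A. f a)"
proof -
  have "r / c \<le> (INF a\<in>A. f a)"
    by (rule cINF_greatest[OF assms(1)]) (use assms(2,3) in \<open>simp add: pos_divide_le_eq mult.commute\<close>)
  then show ?thesis using assms(2) by (simp add: pos_divide_le_eq mult.commute)
qed

definition sublinear_minorant :: "('a::real_vector \<Rightarrow> real) \<Rightarrow> ('a \<Rightarrow> real) \<Rightarrow> bool" where
  "sublinear_minorant p q \<longleftrightarrow>
     (\<forall>v w. q (v + w) \<le> q v + q w) \<and> (\<forall>c v. c > 0 \<longrightarrow> q (c *\<^sub>R v) \<le> c * q v) \<and> (\<forall>v. q v \<le> p v)"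

lemma sublinear_minorantD:
  assumes "sublinear_minorant p q"
  shows "q (v + w) \<le> q v + q w" and "c > 0 \<Longrightarrow> q (c *\<^sub>R v) \<le> c * q v" and "q v \<le> p v"
  using assms unfolding sublinear_minorant_def by blast+

lemma sublinear_minorant_zero:
  assumes "sublinear_minorant p q" "p 0 \<le> 0"
  shows "q 0 = 0"
  using sublinear_minorantD(1)[OF assms(1), of 0 0] sublinear_minorantD(3)[OF assms(1), of 0] assms(2)
  by simp

lemma sublinear_minorant_homogeneous:
  assumes q: "sublinear_minorant p q" and p0: "p 0 \<le> 0" and "c \<ge> 0"
  shows "q (c *\<^sub>R v) = c * q v"
proof (cases "c = 0")
  case True
  then show ?thesis using sublinear_minorant_zero[OF q p0] by simp
next
  case False
  with \<open>c \<ge> 0\<close> have c: "c > 0" by simp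
  have "q v = q (inverse c *\<^sub>R (c *\<^sub>R v))" using c by simp
  also have "\<dots> \<le> inverse c * q (c *\<^sub>R v)"
    using sublinear_minorantD(2)[OF q, of "inverse c" "c *\<^sub>R v"] c by simp
  finally have "c * q v \<le> q (c *\<^sub>R v)" using c by (simp add: field_simps)
  with sublinear_minorantD(2)[OF q, of c v] c show ?thesis by linarith
qed

lemma sublinear_minorant_lower_bound:
  assumes q: "sublinear_minorant p q" and p0: "p 0 \<le> 0"
  shows "- p (- v) \<le> q v"
  using sublinear_minorantD(1)[OF q, of v "- v"] sublinear_minorantD(3)[OF q, of "- v"]
    sublinear_minorant_zero[OF q p0] by simp

lemma sublinear_minorant_shift:
  fixes a :: "'a::real_vector"
  assumes m: "sublinear_minorant p m" and p0: "p 0 \<le> 0"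
  defines "q \<equiv> \<lambda>v. INF t\<in>{0::real..}. m (v + t *\<^sub>R a) - t * m a"
  shows "sublinear_minorant p q" and "t \<ge> 0 \<Longrightarrow> q v \<le> m (v + t *\<^sub>R a) - t * m a"
proof -
  have bdd: "bdd_below ((\<lambda>t. m (v + t *\<^sub>R a) - t * m a) ` {0..})" for v
  proof (rule bdd_belowI2)
    fix t :: real assume "t \<in> {0..}"
    have "t * m a = m ((v + t *\<^sub>R a) + - v)"
      using sublinear_minorant_homogeneous[OF m p0, of t a] \<open>t \<in> {0..}\<close> by simp
    also have "\<dots> \<le> m (v + t *\<^sub>R a) + p (- v)"
      using sublinear_minorantD(1,3)[OF m] by (meson add_left_mono order_trans)
    finally show "- p (- v) \<le> m (v + t *\<^sub>R a) - t * m a" by simp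
  qed
  show upper: "q v \<le> m (v + t *\<^sub>R a) - t * m a" if "t \<ge> 0" for v t
    unfolding q_def using cINF_lower[OF bdd, of t] that by simp
  show "sublinear_minorant p q"
    unfolding sublinear_minorant_def
  proof (intro conjI allI impI)
    fix v w
    show "q (v + w) \<le> q v + q w"
      unfolding q_def
    proof (rule le_INF_add)
      fix t s :: real assume "t \<in> {0..}" "s \<in> {0..}"
      then have "q (v + w) \<le> m ((v + t *\<^sub>R a) + (w + s *\<^sub>R a)) - (t + s) * m a"
        using upper[of "t + s" "v + w"] by (simp add: algebra_simps)
      also have "\<dots> \<le> (m (v + t *\<^sub>R a) - t * m a) + (m (w + s *\<^sub>R a) - s * m a)"
        using sublinear_minorantD(1)[OF m, of "v + t *\<^sub>R a" "w + s *\<^sub>R a"]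
          distrib_right[of t s "m a"] by linarith
      finally show "(INF t\<in>{0..}. m (v + w + t *\<^sub>R a) - t * m a)
          \<le> (m (v + t *\<^sub>R a) - t * m a) + (m (w + s *\<^sub>R a) - s * m a)"
        unfolding q_def .
    qed auto
  next
    fix c :: real and v assume c: "c > 0"
    show "q (c *\<^sub>R v) \<le> c * q v"
      unfolding q_def
    proof (rule le_INF_mult)
      fix t :: real assume "t \<in> {0..}"
      then have "q (c *\<^sub>R v) \<le> m (c *\<^sub>R (v + t *\<^sub>R a)) - (c * t) * m a"
        using upper[of "c * t" "c *\<^sub>R v"] c by (simp add: algebra_simps)
      also have "\<dots> = c * (m (v + t *\<^sub>R a) - t * m a)"
        using sublinear_minorant_homogeneous[OF m p0, of c "v + t *\<^sub>R a"] c
        by (simp add: algebra_simps)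
      finally show "(INF t\<in>{0..}. m (c *\<^sub>R v + t *\<^sub>R a) - t * m a) \<le> c * (m (v + t *\<^sub>R a) - t * m a)"
        unfolding q_def .
    qed (use c in auto)
  next
    fix v
    show "q v \<le> p v" using upper[of 0 v] sublinear_minorantD(3)[OF m, of v] by simp
  qed
qed

text \<open>A minimal sublinear minorant is linear: comparing it with its shift along \<open>a\<close> gives
  superadditivity, hence additivity.\<close>

lemma minimal_sublinear_minorant_linear:
  assumes m: "sublinear_minorant p m" and p0: "p 0 \<le> 0"
    and minimal: "\<And>q. sublinear_minorant p q \<Longrightarrow> \<forall>v. q v \<le> m v \<Longrightarrow> q = m"
  shows "linear m"
proof -
  have superadditive: "m v + m a \<le> m (v + a)" for v a
  proof -
    define q where "q = (\<lambda>v. INF t\<in>{0::real..}. m (v + t *\<^sub>R a) - t * m a)"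
    have "q = m"
      using minimal sublinear_minorant_shift(1)[OF m p0, where a=a]
        sublinear_minorant_shift(2)[OF m p0, where a=a and t=0]
      unfolding q_def by simp
    moreover have "q v \<le> m (v + 1 *\<^sub>R a) - 1 * m a"
      unfolding q_def by (rule sublinear_minorant_shift(2)[OF m p0]) simp
    ultimately show ?thesis by simp
  qed
  have add: "m (v + w) = m v + m w" for v w
    using superadditive[of v w] sublinear_minorantD(1)[OF m] by (meson antisym)
  have neg: "m (- v) = - m v" for v
    using add[of v "- v"] sublinear_minorant_zero[OF m p0] by simp
  show ?thesis
  proof (rule linearI)
    show "m (b1 + b2) = m b1 + m b2" for b1 b2 by (rule add)
    show "m (r *\<^sub>R b) = r *\<^sub>R m b" for r b
    proof (cases "r \<ge> 0")
      case True
      then show ?thesis using sublinear_minorant_homogeneous[OF m p0] by simp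
    next
      case False
      then show ?thesis
        using sublinear_minorant_homogeneous[OF m p0, of "- r" b] neg[of "r *\<^sub>R b"] by simp
    qed
  qed
qed

lemma sublinear_minorant_chain_INF:
  assumes p0: "p 0 \<le> 0" and nonempty: "A \<noteq> {}"
    and minorants: "\<And>q. q \<in> A \<Longrightarrow> sublinear_minorant p q"
    and chain: "\<And>q1 q2. q1 \<in> A \<Longrightarrow> q2 \<in> A \<Longrightarrow> (\<forall>v. q1 v \<le> q2 v) \<or> (\<forall>v. q2 v \<le> q1 v)"
  defines "u \<equiv> \<lambda>v. INF q\<in>A. q v"
  shows "sublinear_minorant p u" and "q \<in> A \<Longrightarrow> u v \<le> q v"
proof -
  have bdd: "bdd_below ((\<lambda>q. q v) ` A)" for v
    by (rule bdd_belowI2[where m="- p (- v)"]) (use minorants sublinear_minorant_lower_bound p0 in blast)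
  show lower: "u v \<le> q v" if "q \<in> A" for q v
    unfolding u_def by (rule cINF_lower[OF bdd that])
  show "sublinear_minorant p u"
    unfolding sublinear_minorant_def
  proof (intro conjI allI impI)
    fix v w
    show "u (v + w) \<le> u v + u w"
      unfolding u_def
    proof (rule le_INF_add[OF nonempty nonempty])
      fix q1 q2 assume q1: "q1 \<in> A" and q2: "q2 \<in> A"
      \<comment> \<open>the smaller of the two comparable minorants witnesses the bound\<close>
      obtain q where q: "q \<in> A" "\<forall>v. q v \<le> q1 v" "\<forall>v. q v \<le> q2 v"
      proof (cases "\<forall>v. q1 v \<le> q2 v")
        case True
        then show ?thesis using that[of q1] q1 by simp
      next
        case False
        then show ?thesis using that[of q2] q2 chain[OF q1 q2] by blast
      qed
      have "u (v + w) \<le> q v + q w"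
        using lower[OF q(1), of "v + w"] sublinear_minorantD(1)[OF minorants[OF q(1)], of v w] by linarith
      also have "\<dots> \<le> q1 v + q2 w" using q by (simp add: add_mono)
      finally show "(INF q\<in>A. q (v + w)) \<le> q1 v + q2 w" unfolding u_def .
    qed
  next
    fix c :: real and v assume c: "c > 0"
    show "u (c *\<^sub>R v) \<le> c * u v"
      unfolding u_def
    proof (rule le_INF_mult[OF nonempty c])
      fix q assume q: "q \<in> A"
      have "u (c *\<^sub>R v) \<le> q (c *\<^sub>R v)" by (rule lower[OF q])
      also have "\<dots> \<le> c * q v" using sublinear_minorantD(2)[OF minorants[OF q] c] .
      finally show "(INF q\<in>A. q (c *\<^sub>R v)) \<le> c * q v" unfolding u_def .
    qed
  next
    fix v
    obtain q where "q \<in> A" using nonempty by blast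
    then show "u v \<le> p v"
      using lower[of q v] sublinear_minorantD(3)[OF minorants[of q], of v] by linarith
  qed
qed

text \<open>Hahn--Banach: a sublinear functional on a real vector space dominates a linear one. A minimal
  sublinear minorant of \<open>p\<close> exists by Zorn's lemma (chains have infima) and is linear.\<close>

theorem hahn_banach_sublinear:
  fixes p :: "'a::real_vector \<Rightarrow> real"
  assumes subadd: "\<And>v w. p (v + w) \<le> p v + p w"
    and poshom: "\<And>c v. c > 0 \<Longrightarrow> p (c *\<^sub>R v) \<le> c * p v"
  obtains f where "linear f" and "\<And>v. f v \<le> p v"
proof -
  have p0: "p 0 \<le> 0" using poshom[of "1/2" 0] by simp
  have p_minorant: "sublinear_minorant p p"
    unfolding sublinear_minorant_def using subadd poshom by auto
  \<comment> \<open>reverse pointwise order, so that a Zorn-maximal element is a minimal minorant\<close>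
  define r where "r = {(q, q'). sublinear_minorant p q \<and> sublinear_minorant p q' \<and> (\<forall>v. q' v \<le> q v)}"
  have field: "Field r = {q. sublinear_minorant p q}"
    unfolding r_def Field_def by auto
  have "Partial_order r"
    unfolding partial_order_on_def preorder_on_def refl_on_def trans_def antisym_def field
    by (auto simp: r_def intro: order_trans) (meson antisym ext)
  moreover have "\<exists>u\<in>Field r. \<forall>q\<in>C. (q, u) \<in> r" if C: "C \<in> Chains r" for C
  proof -
    have minorants: "sublinear_minorant p q" if "q \<in> insert p C" for q
      using that C p_minorant unfolding Chains_def r_def by auto
    have below_p: "\<forall>v. q v \<le> p v" if "q \<in> C" for q
      using sublinear_minorantD(3)[OF minorants[of q]] that by blast
    have "(q1, q2) \<in> r \<or> (q2, q1) \<in> r" if "q1 \<in> C" "q2 \<in> C" for q1 q2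
      using that C unfolding Chains_def by blast
    then have "(\<forall>v. q1 v \<le> q2 v) \<or> (\<forall>v. q2 v \<le> q1 v)" if "q1 \<in> insert p C" "q2 \<in> insert p C" for q1 q2
      using that below_p unfolding r_def by blast
    note infimum = sublinear_minorant_chain_INF[OF p0 insert_not_empty minorants this]
    show ?thesis
      unfolding field using minorants infimum
      by (intro bexI[of _ "\<lambda>v. INF q\<in>insert p C. q v"]) (auto simp: r_def)
  qed
  ultimately obtain m where m: "m \<in> Field r" and maximal: "\<forall>q\<in>Field r. (m, q) \<in> r \<longrightarrow> q = m"
    using Zorns_po_lemma by blast
  have m_minorant: "sublinear_minorant p m" using m field by simp
  have "linear m"
  proof (rule minimal_sublinear_minorant_linear[OF m_minorant p0])
    fix q assume "sublinear_minorant p q" "\<forall>v. q v \<le> m v"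
    then show "q = m" using maximal m_minorant unfolding field by (auto simp: r_def)
  qed
  moreover have "m v \<le> p v" for v using sublinear_minorantD(3)[OF m_minorant] .
  ultimately show ?thesis using that by blast
qed

lemma closed_positive_distance:
  fixes S :: "'a::real_normed_vector set"
  assumes "closed S" and "x \<notin> S"
  obtains d where "d > 0" and "\<And>z. z \<in> S \<Longrightarrow> d \<le> norm (x - z)"
proof (cases "S = {}")
  case True
  then show ?thesis using that[of 1] by simp
next
  case False
  show ?thesis
  proof (rule that)
    show "infdist x S > 0" using infdist_pos_not_in_closed[OF assms(1) False assms(2)] .
    show "infdist x S \<le> norm (x - z)" if "z \<in> S" for z
      using infdist_le[OF that, of x] by (simp add: dist_norm)
  qed
qed

lemma convex_cone_combination:
  assumes "convex C" "z1 \<in> C" "z2 \<in> C" "t \<ge> 0" "s \<ge> 0"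
  obtains z where "z \<in> C" and "(t + s) *\<^sub>R (x - z) = t *\<^sub>R (x - z1) + s *\<^sub>R (x - z2)"
proof (cases "t + s = 0")
  case True
  with assms have "t = 0" "s = 0" by auto
  then show ?thesis using that[of z1] assms by simp
next
  case False
  with assms have ts: "t + s > 0" by simp
  define z where "z = (t / (t + s)) *\<^sub>R z1 + (s / (t + s)) *\<^sub>R z2"
  have "z \<in> C"
    unfolding z_def using assms ts
    by (intro convexD[OF assms(1)]) (auto simp: add_divide_distrib[symmetric])
  moreover have "(t + s) *\<^sub>R z = t *\<^sub>R z1 + s *\<^sub>R z2"
    using ts unfolding z_def by (simp add: scaleR_add_right)
  then have "(t + s) *\<^sub>R (x - z) = t *\<^sub>R (x - z1) + s *\<^sub>R (x - z2)"
    by (simp add: scaleR_diff_right algebra_simps)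
  ultimately show ?thesis by (rule that)
qed

text \<open>A linear functional below it separates \<open>x\<close> from \<open>C\<close>.\<close>

definition separation_gauge :: "'a::real_normed_vector set \<Rightarrow> 'a \<Rightarrow> real \<Rightarrow> 'a \<Rightarrow> real" where
  "separation_gauge C x d v = (INF (t, z)\<in>{0..} \<times> C. norm (v + t *\<^sub>R (x - z)) - t * d)"

context
  fixes C :: "'a::real_normed_vector set" and x :: 'a and d :: real
  assumes convex: "convex C" and nonempty: "C \<noteq> {}" and distance: "\<And>z. z \<in> C \<Longrightarrow> d \<le> norm (x - z)"
begin

lemma separation_gauge_le:
  assumes "t \<ge> 0" "z \<in> C"
  shows "separation_gauge C x d v \<le> norm (v + t *\<^sub>R (x - z)) - t * d"
proof -
  have "- norm v \<le> norm (v + t *\<^sub>R (x - z)) - t * d" if "t \<ge> 0" "z \<in> C" for t z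
  proof -
    have "t * d \<le> norm (t *\<^sub>R (x - z))" using mult_left_mono[OF distance[OF that(2)] that(1)] that(1) by simp
    also have "\<dots> \<le> norm (v + t *\<^sub>R (x - z)) + norm v"
      using norm_triangle_ineq4[of "v + t *\<^sub>R (x - z)" v] by simp
    finally show ?thesis by simp
  qed
  then have "bdd_below ((\<lambda>(t, z). norm (v + t *\<^sub>R (x - z)) - t * d) ` ({0..} \<times> C))"
    by (intro bdd_belowI2[where m="- norm v"]) auto
  from cINF_lower[OF this, of "(t, z)"] assms show ?thesis
    unfolding separation_gauge_def by simp
qed

lemma separation_gauge_subadditive:
  "separation_gauge C x d (v + w) \<le> separation_gauge C x d v + separation_gauge C x d w"
  unfolding separation_gauge_def
proof (rule le_INF_add)
  fix y1 y2 :: "real \<times> 'a" assume "y1 \<in> {0..} \<times> C" "y2 \<in> {0..} \<times> C"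
  then obtain t s :: real and z1 z2 where y: "y1 = (t, z1)" "y2 = (s, z2)" and "t \<ge> 0" "s \<ge> 0" "z1 \<in> C" "z2 \<in> C"
    by auto
  then obtain z where "z \<in> C" and z: "(t + s) *\<^sub>R (x - z) = t *\<^sub>R (x - z1) + s *\<^sub>R (x - z2)"
    using convex_cone_combination[OF convex] by metis
  then have "separation_gauge C x d (v + w) \<le> norm (v + w + (t + s) *\<^sub>R (x - z)) - (t + s) * d"
    by (intro separation_gauge_le) (use \<open>t \<ge> 0\<close> \<open>s \<ge> 0\<close> in auto)
  also have "\<dots> = norm ((v + t *\<^sub>R (x - z1)) + (w + s *\<^sub>R (x - z2))) - t * d - s * d"
    unfolding z by (simp add: algebra_simps)
  also have "\<dots> \<le> (norm (v + t *\<^sub>R (x - z1)) - t * d) + (norm (w + s *\<^sub>R (x - z2)) - s * d)"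
    using norm_triangle_ineq by simp
  finally show "(INF (t, z)\<in>{0..} \<times> C. norm (v + w + t *\<^sub>R (x - z)) - t * d)
      \<le> (case y1 of (t, z) \<Rightarrow> norm (v + t *\<^sub>R (x - z)) - t * d)
       + (case y2 of (t, z) \<Rightarrow> norm (w + t *\<^sub>R (x - z)) - t * d)"
    unfolding separation_gauge_def y by simp
qed (use nonempty in auto)

lemma separation_gauge_positively_homogeneous:
  assumes "c > 0"
  shows "separation_gauge C x d (c *\<^sub>R v) \<le> c * separation_gauge C x d v"
  unfolding separation_gauge_def
proof (rule le_INF_mult[OF _ assms])
  fix y :: "real \<times> 'a" assume "y \<in> {0..} \<times> C"
  then obtain t :: real and z where y: "y = (t, z)" and "t \<ge> 0" "z \<in> C" by auto
  have scale: "c *\<^sub>R v + (c * t) *\<^sub>R (x - z) = c *\<^sub>R (v + t *\<^sub>R (x - z))"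
    by (simp add: algebra_simps)
  have "separation_gauge C x d (c *\<^sub>R v) \<le> norm (c *\<^sub>R v + (c * t) *\<^sub>R (x - z)) - (c * t) * d"
    using separation_gauge_le \<open>t \<ge> 0\<close> \<open>z \<in> C\<close> assms by simp
  also have "\<dots> = c * (norm (v + t *\<^sub>R (x - z)) - t * d)"
    unfolding scale using assms by (simp add: right_diff_distrib)
  finally show "(INF (t, z)\<in>{0..} \<times> C. norm (c *\<^sub>R v + t *\<^sub>R (x - z)) - t * d)
      \<le> c * (case y of (t, z) \<Rightarrow> norm (v + t *\<^sub>R (x - z)) - t * d)"
    unfolding separation_gauge_def y by simp
qed (use nonempty in auto)

lemma separation_gauge_le_norm: "separation_gauge C x d v \<le> norm v"
  using separation_gauge_le[of 0] nonempty by fastforce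

lemma separation_gauge_at_point: "z \<in> C \<Longrightarrow> separation_gauge C x d (z - x) \<le> - d"
  using separation_gauge_le[of 1 z "z - x"] by simp

end

theorem closed_convex_point_separation:
  fixes C :: "'a::real_normed_vector set"
  assumes "closed C" "convex C" "x \<notin> C"
  obtains w :: "'a \<Rightarrow>\<^sub>L real" and \<delta> where "\<delta> > 0" and "\<And>z. z \<in> C \<Longrightarrow> \<delta> \<le> blinfun_apply w (x - z)"
proof (cases "C = {}")
  case True
  then show ?thesis using that[of 1 0] by simp
next
  case nonempty: False
  obtain d where "d > 0" and distance: "\<And>z. z \<in> C \<Longrightarrow> d \<le> norm (x - z)"
    using closed_positive_distance[OF assms(1,3)] by blast
  note gauge = separation_gauge_subadditive separation_gauge_positively_homogeneous
    separation_gauge_le_norm separation_gauge_at_point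
  obtain f where f: "linear f" and below: "\<And>v. f v \<le> separation_gauge C x d v"
    using hahn_banach_sublinear[of "separation_gauge C x d"] gauge[OF assms(2) nonempty distance] by blast
  have f_norm: "f v \<le> norm v" for v
    using below[of v] gauge(3)[OF assms(2) nonempty distance] by (meson order_trans)
  have "bounded_linear f"
  proof (rule bounded_linear_intro[where K=1])
    show "f (a + b) = f a + f b" "f (r *\<^sub>R a) = r *\<^sub>R f a" for a b r
      using f by (simp_all add: linear_add linear_scale)
    show "norm (f a) \<le> norm a * 1" for a
      using f_norm[of a] f_norm[of "- a"] linear_neg[OF f, of a] by auto
  qed
  moreover have "d \<le> f (x - z)" if "z \<in> C" for z
    using below[of "z - x"] gauge(4)[OF assms(2) nonempty distance that] linear_neg[OF f, of "x - z"]
    by simp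
  ultimately show ?thesis
    using that[of d "Blinfun f"] \<open>d > 0\<close> by (simp add: bounded_linear_Blinfun_apply)
qed

lemma ereal_SUP_finite_iff:
  fixes f :: "'i \<Rightarrow> ereal"
  shows "(SUP y\<in>A. f y) \<noteq> \<infinity> \<longleftrightarrow> (\<exists>M. \<forall>y\<in>A. f y \<le> ereal M)"
proof
  assume "(SUP y\<in>A. f y) \<noteq> \<infinity>"
  then obtain M where "(SUP y\<in>A. f y) \<le> ereal M"
    by (metis less_PInf_Ex_of_nat less_imp_le less_top)
  then show "\<exists>M. \<forall>y\<in>A. f y \<le> ereal M" by (meson SUP_le_iff)
next
  assume "\<exists>M. \<forall>y\<in>A. f y \<le> ereal M"
  then obtain M where "\<forall>y\<in>A. f y \<le> ereal M" by blast
  then have "(SUP y\<in>A. f y) \<le> ereal M" by (simp add: SUP_least)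
  then show "(SUP y\<in>A. f y) \<noteq> \<infinity>" by auto
qed

lemma graph_op_dom: "(z, zs) \<in> graph_op T \<Longrightarrow> z \<in> dom_op T"
  unfolding graph_op_def dom_op_def by auto

lemma dom_fitzpatrick_iff:
  "(x, xs) \<in> dom_fitzpatrick T \<longleftrightarrow>
     (\<exists>M. \<forall>(z, zs)\<in>graph_op T. blinfun_apply (xs - zs) (z - x) \<le> M)"
proof -
  define S where "S = (SUP (z, zs)\<in>graph_op T. ereal (blinfun_apply (xs - zs) (z - x)))"
  have "(x, xs) \<in> dom_fitzpatrick T \<longleftrightarrow> S + ereal (blinfun_apply xs x) < \<infinity>"
    by (simp add: dom_fitzpatrick_def fitzpatrick_def S_def)
  also have "\<dots> \<longleftrightarrow> S \<noteq> \<infinity>" by (cases S) auto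
  also have "\<dots> \<longleftrightarrow> (\<exists>M. \<forall>(z, zs)\<in>graph_op T. blinfun_apply (xs - zs) (z - x) \<le> M)"
    unfolding S_def ereal_SUP_finite_iff by (simp add: case_prod_beta)
  finally show ?thesis .
qed

text \<open>Moving the constant \<open>\<langle>x*, x\<rangle>\<close> into the bound gives a condition that is affine in
  \<open>(x, x*)\<close>; hence the domain of the Fitzpatrick function is convex.\<close>

lemma dom_fitzpatrick_iff_affine:
  "(x, xs) \<in> dom_fitzpatrick T \<longleftrightarrow>
     (\<exists>M. \<forall>(z, zs)\<in>graph_op T. blinfun_apply xs z + blinfun_apply zs x - blinfun_apply zs z \<le> M)"
proof -
  define A where "A z zs = blinfun_apply xs z + blinfun_apply zs x - blinfun_apply zs z" for z zs
  have shift: "blinfun_apply (xs - zs) (z - x) = A z zs - blinfun_apply xs x" for zs z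
    unfolding A_def by (simp add: blinfun.diff_left blinfun.diff_right)
  have "(\<exists>M. \<forall>(z, zs)\<in>graph_op T. A z zs - blinfun_apply xs x \<le> M)
      \<longleftrightarrow> (\<exists>M. \<forall>(z, zs)\<in>graph_op T. A z zs \<le> M)"
  proof
    assume "\<exists>M. \<forall>(z, zs)\<in>graph_op T. A z zs - blinfun_apply xs x \<le> M"
    then obtain M where "\<forall>(z, zs)\<in>graph_op T. A z zs - blinfun_apply xs x \<le> M" by blast
    then show "\<exists>M. \<forall>(z, zs)\<in>graph_op T. A z zs \<le> M"
      by (intro exI[of _ "M + blinfun_apply xs x"]) auto
  next
    assume "\<exists>M. \<forall>(z, zs)\<in>graph_op T. A z zs \<le> M"
    then obtain M where "\<forall>(z, zs)\<in>graph_op T. A z zs \<le> M" by blast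
    then show "\<exists>M. \<forall>(z, zs)\<in>graph_op T. A z zs - blinfun_apply xs x \<le> M"
      by (intro exI[of _ "M - blinfun_apply xs x"]) auto
  qed
  then show ?thesis unfolding dom_fitzpatrick_iff shift A_def .
qed

lemma convex_dom_fitzpatrick: "convex (dom_fitzpatrick T)"
proof (rule convexI)
  fix p1 p2 :: "'a \<times> ('a \<Rightarrow>\<^sub>L real)" and u v :: real
  assume "p1 \<in> dom_fitzpatrick T" "p2 \<in> dom_fitzpatrick T" and uv: "0 \<le> u" "0 \<le> v" "u + v = 1"
  obtain x1 xs1 x2 xs2 where p: "p1 = (x1, xs1)" "p2 = (x2, xs2)" by fastforce
  define E where "E x xs z zs = blinfun_apply xs z + blinfun_apply zs x - blinfun_apply zs z"
    for x z :: 'a and xs zs :: "'a \<Rightarrow>\<^sub>L real"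
  obtain M1 M2 where M1: "\<forall>(z, zs)\<in>graph_op T. E x1 xs1 z zs \<le> M1"
    and M2: "\<forall>(z, zs)\<in>graph_op T. E x2 xs2 z zs \<le> M2"
    using \<open>p1 \<in> _\<close> \<open>p2 \<in> _\<close> unfolding p dom_fitzpatrick_iff_affine E_def by blast
  have "E (u *\<^sub>R x1 + v *\<^sub>R x2) (u *\<^sub>R xs1 + v *\<^sub>R xs2) z zs \<le> u * M1 + v * M2"
    if "(z, zs) \<in> graph_op T" for z zs
  proof -
    have "E (u *\<^sub>R x1 + v *\<^sub>R x2) (u *\<^sub>R xs1 + v *\<^sub>R xs2) z zs
        = u * blinfun_apply xs1 z + v * blinfun_apply xs2 z + u * blinfun_apply zs x1
          + v * blinfun_apply zs x2 - (u + v) * blinfun_apply zs z"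
      unfolding E_def using uv(3)
      by (simp add: blinfun.add_left blinfun.add_right blinfun.scaleR_left blinfun.scaleR_right)
    also have "\<dots> = u * E x1 xs1 z zs + v * E x2 xs2 z zs"
      unfolding E_def by (simp add: algebra_simps)
    also have "\<dots> \<le> u * M1 + v * M2"
      using M1 M2 that uv by (intro add_mono mult_left_mono) auto
    finally show ?thesis .
  qed
  then have "(u *\<^sub>R x1 + v *\<^sub>R x2, u *\<^sub>R xs1 + v *\<^sub>R xs2) \<in> dom_fitzpatrick T"
    unfolding dom_fitzpatrick_iff_affine E_def by blast
  then show "u *\<^sub>R p1 + v *\<^sub>R p2 \<in> dom_fitzpatrick T" unfolding p by simp
qed

lemma convex_fst_dom_fitzpatrick: "convex (fst ` dom_fitzpatrick T)"
  by (rule convex_linear_image[OF bounded_linear.linear[OF bounded_linear_fst] convex_dom_fitzpatrick])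

lemma fst_dom_fitzpatrick_iff:
  "x \<in> fst ` dom_fitzpatrick T \<longleftrightarrow>
     (\<exists>xs M. \<forall>(z, zs)\<in>graph_op T. blinfun_apply (xs - zs) (z - x) \<le> M)"
  unfolding dom_fitzpatrick_iff[symmetric] by force

text \<open>For a monotone operator, \<open>(z, z*) \<in> G(T)\<close> gives \<open>\<phi>\<^sub>T(z, z*) = \<langle>z*, z\<rangle>\<close>, so \<open>D\<^sub>T \<subseteq> \<pi>\<^sub>1 dom \<phi>\<^sub>T\<close>.\<close>

lemma dom_op_subset_fst_dom_fitzpatrick:
  assumes "monotone_op T"
  shows "dom_op T \<subseteq> fst ` dom_fitzpatrick T"
proof
  fix z assume "z \<in> dom_op T"
  then obtain zs where zs: "zs \<in> T z" unfolding dom_op_def by auto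
  have "blinfun_apply (zs - ws) (w - z) \<le> 0" if "(w, ws) \<in> graph_op T" for w ws
  proof -
    have "0 \<le> blinfun_apply (ws - zs) (w - z)"
      using assms zs that unfolding monotone_op_def graph_op_def by auto
    then show ?thesis by (simp add: blinfun.diff_left)
  qed
  then show "z \<in> fst ` dom_fitzpatrick T"
    unfolding fst_dom_fitzpatrick_iff by blast
qed

text \<open>Outside \<open>cl D\<^sub>T\<close>, a point \<open>x \<in> \<pi>\<^sub>1 dom \<phi>\<^sub>T\<close> has bounded slopes \<open>\<langle>z*, x - z\<rangle> / \<parallel>x - z\<parallel>\<close>:
  the Fitzpatrick bound controls \<open>\<langle>z*, x - z\<rangle>\<close> up to a term linear in \<open>\<parallel>x - z\<parallel>\<close>, and
  \<open>\<parallel>x - z\<parallel>\<close> stays away from 0.\<close>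

lemma bounded_slope_if_fst_dom_fitzpatrick:
  assumes "x \<in> fst ` dom_fitzpatrick T" and outside: "x \<notin> closure (dom_op T)"
  shows "(SUP (z, zs)\<in>graph_op T. ereal (blinfun_apply zs (x - z) / norm (x - z))) \<noteq> \<infinity>"
proof -
  obtain xs M where bound: "\<forall>(z, zs)\<in>graph_op T. blinfun_apply (xs - zs) (z - x) \<le> M"
    using assms(1) unfolding fst_dom_fitzpatrick_iff by blast
  obtain d where "d > 0" and distance: "\<And>z. z \<in> closure (dom_op T) \<Longrightarrow> d \<le> norm (x - z)"
    using closed_positive_distance[OF closed_closure outside] by blast
  define K where "K = \<bar>M\<bar> / d + norm xs"
  have "blinfun_apply zs (x - z) / norm (x - z) \<le> K" if "(z, zs) \<in> graph_op T" for z zs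
  proof -
    define n where "n = norm (x - z)"
    have "d \<le> n" unfolding n_def using distance graph_op_dom[OF that] closure_subset by blast
    with \<open>d > 0\<close> have "n > 0" by simp
    have "blinfun_apply zs (x - z) = blinfun_apply (xs - zs) (z - x) + blinfun_apply xs (x - z)"
      by (simp add: blinfun.diff_left blinfun.diff_right)
    also have "\<dots> \<le> \<bar>M\<bar> + norm xs * n"
      using bound that norm_blinfun[of xs "x - z"] unfolding n_def by fastforce
    also have "\<bar>M\<bar> \<le> \<bar>M\<bar> / d * n"
      using mult_right_mono[OF \<open>d \<le> n\<close> abs_ge_zero[of M]] \<open>d > 0\<close> by (simp add: field_simps)
    finally have "blinfun_apply zs (x - z) \<le> K * n" unfolding K_def by (simp add: distrib_right)
    then show ?thesis using \<open>n > 0\<close> unfolding n_def by (simp add: pos_divide_le_eq)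
  qed
  then show ?thesis unfolding ereal_SUP_finite_iff by (intro exI[of _ K]) auto
qed

text \<open>Conversely, for bounded \<open>D\<^sub>T\<close> bounded slopes at \<open>x \<notin> cl D\<^sub>T\<close> put \<open>(x, 0)\<close> into
  \<open>dom \<phi>\<^sub>T\<close>, since \<open>\<parallel>x - z\<parallel>\<close> is bounded on \<open>D\<^sub>T\<close>.\<close>

lemma fst_dom_fitzpatrick_if_bounded_slope:
  assumes "bounded (dom_op T)" and outside: "x \<notin> closure (dom_op T)"
    and "(SUP (z, zs)\<in>graph_op T. ereal (blinfun_apply zs (x - z) / norm (x - z))) \<noteq> \<infinity>"
  shows "x \<in> fst ` dom_fitzpatrick T"
proof -
  obtain K where K: "\<forall>y\<in>graph_op T. (case y of (z, zs) \<Rightarrow> ereal (blinfun_apply zs (x - z) / norm (x - z))) \<le> ereal K"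
    using assms(3) unfolding ereal_SUP_finite_iff by blast
  have slope: "blinfun_apply zs (x - z) / norm (x - z) \<le> K" if "(z, zs) \<in> graph_op T" for z zs
    using K that by fastforce
  obtain B where B: "\<forall>z\<in>dom_op T. norm z \<le> B" using assms(1) unfolding bounded_iff by blast
  have "blinfun_apply (0 - zs) (z - x) \<le> \<bar>K\<bar> * (norm x + B)" if "(z, zs) \<in> graph_op T" for z zs
  proof -
    define n where "n = norm (x - z)"
    have "z \<in> dom_op T" using graph_op_dom[OF that] .
    then have "z \<noteq> x" using outside closure_subset by blast
    then have "n > 0" unfolding n_def by simp
    have "blinfun_apply zs (x - z) \<le> K * n"
      using slope[OF that] \<open>n > 0\<close> unfolding n_def by (simp add: pos_divide_le_eq)
    also have "\<dots> \<le> \<bar>K\<bar> * n" using \<open>n > 0\<close> by (simp add: mult_right_mono)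
    also have "\<dots> \<le> \<bar>K\<bar> * (norm x + B)"
      using B \<open>z \<in> dom_op T\<close> norm_triangle_ineq4[of x z] unfolding n_def
      by (intro mult_left_mono) force+
    finally show ?thesis by (simp add: blinfun.diff_right blinfun.minus_left)
  qed
  then show ?thesis unfolding fst_dom_fitzpatrick_iff by blast
qed

lemma closure_subset_iff_closures_eq:
  fixes D F :: "'a::real_normed_vector set"
  assumes "D \<subseteq> F" and "convex F"
  shows "F \<subseteq> closure D \<longleftrightarrow>
           closure D = closure (convex hull D) \<and> closure (convex hull D) = closure F"
proof
  assume "F \<subseteq> closure D"
  moreover have "convex hull D \<subseteq> F" using assms by (simp add: hull_minimal)
  ultimately have "closure (convex hull D) \<subseteq> closure F" "closure F \<subseteq> closure D"
    by (simp_all add: closure_mono closure_minimal)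
  moreover have "closure D \<subseteq> closure (convex hull D)" by (simp add: closure_mono hull_subset)
  ultimately show "closure D = closure (convex hull D) \<and> closure (convex hull D) = closure F"
    by blast
next
  assume "closure D = closure (convex hull D) \<and> closure (convex hull D) = closure F"
  then show "F \<subseteq> closure D" using closure_subset by blast
qed

lemma maximal_monotone_op_memI:
  assumes maximal: "maximal_monotone_op T"
    and related: "\<forall>(z, zs)\<in>graph_op T. 0 \<le> blinfun_apply (ys - zs) (x - z)"
  shows "ys \<in> T x"
proof -
  define S where "S = T(x := insert ys (T x))"
  have graph_S: "graph_op S = insert (x, ys) (graph_op T)"
    unfolding graph_op_def S_def by (auto split: if_splits)
  have swap: "blinfun_apply (a - b) (u - v) = blinfun_apply (b - a) (v - u)" for a b :: "'a \<Rightarrow>\<^sub>L real" and u v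
    by (simp add: blinfun.diff_left blinfun.diff_right)
  have "monotone_op S"
    using maximal related unfolding monotone_op_def maximal_monotone_op_def graph_S
    by (auto simp: swap[of ys])
  moreover have "graph_op T \<subseteq> graph_op S" unfolding graph_S by blast
  ultimately have "graph_op S = graph_op T" using maximal unfolding maximal_monotone_op_def by blast
  then show ?thesis unfolding graph_S by (auto simp: graph_op_def)
qed

text \<open>For maximal monotone \<open>T\<close> with \<open>cl D\<^sub>T\<close> convex, \<open>\<pi>\<^sub>1 dom \<phi>\<^sub>T \<subseteq> cl D\<^sub>T\<close>: separate a point
  \<open>x \<notin> cl D\<^sub>T\<close> from \<open>cl D\<^sub>T\<close> by \<open>w\<close>; if \<open>(x, x*) \<in> dom \<phi>\<^sub>T\<close>, then for large \<open>t\<close> the pair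
  \<open>(x, x* + t w)\<close> is monotonically related to \<open>G(T)\<close>, so by maximality \<open>x \<in> D\<^sub>T\<close>.\<close>

lemma maximal_monotone_fst_dom_fitzpatrick_subset:
  assumes maximal: "maximal_monotone_op T" and convex: "convex (closure (dom_op T))"
  shows "fst ` dom_fitzpatrick T \<subseteq> closure (dom_op T)"
proof
  fix x assume "x \<in> fst ` dom_fitzpatrick T"
  then obtain xs M where bound: "\<forall>(z, zs)\<in>graph_op T. blinfun_apply (xs - zs) (z - x) \<le> M"
    unfolding fst_dom_fitzpatrick_iff by blast
  show "x \<in> closure (dom_op T)"
  proof (rule ccontr)
    assume "x \<notin> closure (dom_op T)"
    then obtain w :: "'a \<Rightarrow>\<^sub>L real" and \<delta> where "\<delta> > 0"
      and separation: "\<And>z. z \<in> closure (dom_op T) \<Longrightarrow> \<delta> \<le> blinfun_apply w (x - z)"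
      using closed_convex_point_separation[OF closed_closure convex] by blast
    define t where "t = (\<bar>M\<bar> + 1) / \<delta>"
    have "0 \<le> blinfun_apply (xs + t *\<^sub>R w - zs) (x - z)" if "(z, zs) \<in> graph_op T" for z zs
    proof -
      have "\<delta> \<le> blinfun_apply w (x - z)"
        using separation graph_op_dom[OF that] closure_subset by blast
      then have "t * \<delta> \<le> t * blinfun_apply w (x - z)"
        using \<open>\<delta> > 0\<close> unfolding t_def by (intro mult_left_mono) simp_all
      moreover have "t * \<delta> = \<bar>M\<bar> + 1" using \<open>\<delta> > 0\<close> unfolding t_def by simp
      moreover have "blinfun_apply (xs + t *\<^sub>R w - zs) (x - z)
          = t * blinfun_apply w (x - z) - blinfun_apply (xs - zs) (z - x)"
        by (simp add: blinfun.diff_left blinfun.diff_right blinfun.add_left blinfun.scaleR_left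
            algebra_simps)
      ultimately show ?thesis using bound that by force
    qed
    then have "xs + t *\<^sub>R w \<in> T x" using maximal_monotone_op_memI[OF maximal] by blast
    then have "x \<in> dom_op T" unfolding dom_op_def by blast
    then show False using \<open>x \<notin> closure (dom_op T)\<close> closure_subset by blast
  qed
qed

theorem theorem1p3:
  fixes T :: "'a::banach \<Rightarrow> ('a \<Rightarrow>\<^sub>L real) set"
  assumes mono: "monotone_op T"
    and bdd: "bounded (dom_op T)"
  defines "C1 \<equiv> (\<forall>x. x \<notin> closure (dom_op T) \<longrightarrow>
              (SUP (z, zs)\<in>graph_op T. ereal (blinfun_apply zs (x - z) / norm (x - z))) = \<infinity>)"
    and "C2 \<equiv> fst ` dom_fitzpatrick T \<subseteq> closure (dom_op T)"
    and "C3 \<equiv> (closure (dom_op T) = closure (convex hull (dom_op T)) \<and>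
               closure (convex hull (dom_op T)) = closure (fst ` dom_fitzpatrick T))"
    and "C4 \<equiv> convex (closure (dom_op T))"
  shows "(C1 \<longleftrightarrow> C2) \<and> (C2 \<longleftrightarrow> C3) \<and> (C1 \<longrightarrow> C4) \<and> (C2 \<longrightarrow> C4) \<and> (C3 \<longrightarrow> C4)
         \<and> (maximal_monotone_op T \<longrightarrow> (C4 \<longleftrightarrow> C1) \<and> (C4 \<longleftrightarrow> C2) \<and> (C4 \<longleftrightarrow> C3))"
proof -
  have "C1 \<longleftrightarrow> C2"
    unfolding C1_def C2_def
    using bounded_slope_if_fst_dom_fitzpatrick fst_dom_fitzpatrick_if_bounded_slope[OF bdd] by blast
  moreover have "C2 \<longleftrightarrow> C3"
    unfolding C2_def C3_def
    by (rule closure_subset_iff_closures_eq[OF dom_op_subset_fst_dom_fitzpatrick[OF mono]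
          convex_fst_dom_fitzpatrick])
  moreover have "C3 \<longrightarrow> C4"
    unfolding C3_def C4_def by (metis convex_closure convex_convex_hull)
  moreover have "maximal_monotone_op T \<longrightarrow> C4 \<longrightarrow> C2"
    unfolding C2_def C4_def using maximal_monotone_fst_dom_fitzpatrick_subset by blast
  ultimately show ?thesis by blast
qed

end
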